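(* Let $G$ be a finite non-abelian group. If there is a prime $p$ such that $G/Z(G)\cong C_p\times C_p$, then $G$ is induced regular.
   Context: For a finite group $G$, $C_G(x)$ denotes the centralizer of $x\in G$ and $Z(G)$ the center. The non-centralizer graph $\Upsilon_G$ is the simple graph with vertex set $G$ in which two distinct vertices $x,y$ are adjacent iff $C_G(x)\neq C_G(y)$; the induced non-centralizer graph $\Upsilon_{G\setminus Z(G)}$ is its induced subgraph on $G\setminus Z(G)$. $G$ is called induced regular if $\Upsilon_{G\setminus Z(G)}$ is a regular graph (all vertices have the same degree). *)

theory Defs
  imports "HOL-Algebra.Algebra"
begin

definition centralizer :: "('a, 'b) monoid_scheme \<Rightarrow> 'a \<Rightarrow> 'a set" where
  "centralizer G x = {y \<in> carrier G. x \<otimes>\<^bsub>G\<^esub> y = y \<otimes>\<^bsub>G\<^esub> x}"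

definition group_center :: "('a, 'b) monoid_scheme \<Rightarrow> 'a set" where
  "group_center G = {z \<in> carrier G. \<forall>y \<in> carrier G. z \<otimes>\<^bsub>G\<^esub> y = y \<otimes>\<^bsub>G\<^esub> z}"

definition noncent_adj :: "('a, 'b) monoid_scheme \<Rightarrow> 'a \<Rightarrow> 'a \<Rightarrow> bool" where
  "noncent_adj G x y \<longleftrightarrow> x \<noteq> y \<and> centralizer G x \<noteq> centralizer G y"

definition induced_noncent_degree :: "('a, 'b) monoid_scheme \<Rightarrow> 'a \<Rightarrow> nat" where
  "induced_noncent_degree G x =
     card {y \<in> carrier G - group_center G. noncent_adj G x y}"

definition induced_regular :: "('a, 'b) monoid_scheme \<Rightarrow> bool" where
  "induced_regular G \<longleftrightarrow>
     (\<forall>x \<in> carrier G - group_center G. \<forall>y \<in> carrier G - group_center G.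
        induced_noncent_degree G x = induced_noncent_degree G y)"

end

theory Submission
  imports Defs "HOL-Computational_Algebra.Primes"
begin

text \<open>If \<open>[G : Z(G)] = p\<^sup>2\<close>, every centralizer of a non-central element \<open>x\<close> lies strictly
  between \<open>Z(G)\<close> and \<open>G\<close>, so by Lagrange it has index \<open>p\<close> over \<open>Z(G)\<close>.  Two such
  centralizers that share a non-central element meet in a subgroup strictly above \<open>Z(G)\<close>,
  hence coincide.  Consequently the non-neighbours of \<open>x\<close> among the non-central elements
  are exactly the elements of \<open>C\<^sub>G(x)\<close>, and every non-central vertex has degree
  \<open>|G| - p |Z(G)|\<close>.\<close>

lemma group_center_subset_centralizer:
  "x \<in> carrier G \<Longrightarrow> group_center G \<subseteq> centralizer G x"
  by (auto simp: group_center_def centralizer_def)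

lemma mem_centralizer_self: "x \<in> carrier G \<Longrightarrow> x \<in> centralizer G x"
  by (simp add: centralizer_def)

lemma centralizer_eq_carrier_iff:
  "x \<in> carrier G \<Longrightarrow> centralizer G x = carrier G \<longleftrightarrow> x \<in> group_center G"
  by (auto simp: group_center_def centralizer_def)

lemma (in group) inv_commute:
  assumes "a \<in> carrier G" "y \<in> carrier G" "a \<otimes> y = y \<otimes> a"
  shows "inv a \<otimes> y = y \<otimes> inv a"
proof -
  have "inv a \<otimes> y = inv a \<otimes> (y \<otimes> a) \<otimes> inv a" using assms(1,2) by (simp add: m_assoc)
  also have "\<dots> = inv a \<otimes> (a \<otimes> y) \<otimes> inv a" using assms(3) by simp
  also have "\<dots> = y \<otimes> inv a" using assms(1,2) by (simp add: m_assoc[symmetric])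
  finally show ?thesis .
qed

lemma (in group) subgroup_centralizer:
  assumes "x \<in> carrier G"
  shows "subgroup (centralizer G x) G"
proof
  fix a b assume "a \<in> centralizer G x" "b \<in> centralizer G x"
  then have a: "a \<in> carrier G" "x \<otimes> a = a \<otimes> x" and b: "b \<in> carrier G" "x \<otimes> b = b \<otimes> x"
    by (auto simp: centralizer_def)
  have "x \<otimes> (a \<otimes> b) = a \<otimes> (x \<otimes> b)"
    using a b(1) assms by (simp add: m_assoc[symmetric])
  also have "\<dots> = (a \<otimes> b) \<otimes> x"
    using a b assms by (simp add: m_assoc)
  finally show "a \<otimes> b \<in> centralizer G x"
    using a b by (simp add: centralizer_def)
next
  fix a assume "a \<in> centralizer G x"
  then show "inv a \<in> centralizer G x"
    using assms inv_commute[of a x] by (simp add: centralizer_def)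
qed (use assms in \<open>auto simp: centralizer_def\<close>)

lemma (in group) subgroup_group_center: "subgroup (group_center G) G"
proof
  fix a b assume "a \<in> group_center G" "b \<in> group_center G"
  then have a: "a \<in> carrier G" "\<And>y. y \<in> carrier G \<Longrightarrow> a \<otimes> y = y \<otimes> a"
    and b: "b \<in> carrier G" "\<And>y. y \<in> carrier G \<Longrightarrow> b \<otimes> y = y \<otimes> b"
    by (auto simp: group_center_def)
  have "a \<otimes> b \<otimes> y = y \<otimes> (a \<otimes> b)" if y: "y \<in> carrier G" for y
  proof -
    have "a \<otimes> b \<otimes> y = a \<otimes> (y \<otimes> b)" using a(1) b y by (simp add: m_assoc)
    also have "\<dots> = (a \<otimes> y) \<otimes> b" using a(1) b(1) y by (simp add: m_assoc)
    also have "\<dots> = y \<otimes> (a \<otimes> b)" using a b(1) y by (simp add: m_assoc)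
    finally show ?thesis .
  qed
  then show "a \<otimes> b \<in> group_center G"
    using a(1) b(1) by (simp add: group_center_def)
next
  fix a assume "a \<in> group_center G"
  then show "inv a \<in> group_center G"
    using inv_commute[of a] by (auto simp: group_center_def)
qed (auto simp: group_center_def)

lemma (in group) card_subgroup_dvd:
  assumes "subgroup H G" "subgroup K G" "H \<subseteq> K"
  shows "card H dvd card K"
proof -
  interpret K: group "G\<lparr>carrier := K\<rparr>"
    using assms(2) subgroup.subgroup_is_group is_group by blast
  have "card (rcosets\<^bsub>G\<lparr>carrier := K\<rparr>\<^esub> H) * card H = card K"
    using K.lagrange subgroup_incl[OF assms] by (simp add: order_def)
  then show ?thesis by (metis dvd_triv_right)
qed

lemma (in group) card_subgroup_eq_prime_power_mult:
  assumes "Factorial_Ring.prime p" "subgroup Z G" "subgroup H G" "Z \<subseteq> H" "finite H"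
    and "card H dvd p ^ n * card Z"
  obtains i where "i \<le> n" "card H = p ^ i * card Z"
proof -
  obtain m where m: "card H = card Z * m"
    using card_subgroup_dvd[OF assms(2-4)] by blast
  have "finite Z" "Z \<noteq> {}"
    using assms(2,4,5) finite_subset subgroup.one_closed by blast+
  then have "m dvd p ^ n"
    using assms(6) m by (simp add: mult.commute)
  then obtain i where "i \<le> n" "m = p ^ i"
    using divides_primepow_nat[OF assms(1)] by blast
  then show ?thesis using that m by (simp add: mult.commute)
qed

lemma induced_noncent_degree_eq_card_diff_centralizer:
  assumes "finite (carrier G)" and x: "x \<in> carrier G - group_center G"
    and centralizer_eq: "\<And>y. y \<in> carrier G - group_center G \<Longrightarrow> y \<in> centralizer G x
      \<Longrightarrow> centralizer G y = centralizer G x"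
  shows "induced_noncent_degree G x = card (carrier G) - card (centralizer G x)"
proof -
  have xG: "x \<in> carrier G" using x by blast
  note xC = mem_centralizer_self[OF xG]
  have "{y \<in> carrier G - group_center G. noncent_adj G x y} = carrier G - centralizer G x"
  proof (intro equalityI subsetI)
    fix y assume "y \<in> {y \<in> carrier G - group_center G. noncent_adj G x y}"
    then have "y \<in> carrier G - group_center G" "centralizer G y \<noteq> centralizer G x"
      by (auto simp: noncent_adj_def)
    then show "y \<in> carrier G - centralizer G x"
      using centralizer_eq by blast
  next
    fix y assume y: "y \<in> carrier G - centralizer G x"
    then have "y \<notin> group_center G"
      using group_center_subset_centralizer[OF xG] by blast
    moreover have "centralizer G x \<noteq> centralizer G y"
      using y mem_centralizer_self[of y G] by blast
    moreover have "x \<noteq> y" using y xC by blast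
    ultimately show "y \<in> {y \<in> carrier G - group_center G. noncent_adj G x y}"
      using y by (simp add: noncent_adj_def)
  qed
  moreover have "centralizer G x \<subseteq> carrier G" by (auto simp: centralizer_def)
  ultimately show ?thesis
    unfolding induced_noncent_degree_def using assms(1) by (simp add: card_Diff_subset finite_subset)
qed

locale center_index_prime_square = group G for G (structure) +
  fixes p :: nat
  assumes finite_carrier: "finite (carrier G)"
    and prime_p: "Factorial_Ring.prime p"
    and card_carrier: "card (carrier G) = p ^ 2 * card (group_center G)"
begin

lemma finite_centralizer: "finite (centralizer G x)"
  using finite_carrier by (rule rev_finite_subset) (auto simp: centralizer_def)

lemma card_centralizer:
  assumes x: "x \<in> carrier G - group_center G"
  shows "card (centralizer G x) = p * card (group_center G)"
proof -
  have xG: "x \<in> carrier G" using x by blast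
  note C = subgroup_centralizer[OF xG]
  have "card (centralizer G x) dvd p ^ 2 * card (group_center G)"
    using card_subgroup_dvd[OF C subgroup_self subgroup.subset[OF C]] card_carrier by simp
  then obtain i where i: "i \<le> 2" "card (centralizer G x) = p ^ i * card (group_center G)"
    by (rule card_subgroup_eq_prime_power_mult[OF prime_p subgroup_group_center C
        group_center_subset_centralizer[OF xG] finite_centralizer])
  have "group_center G \<subset> centralizer G x"
    using x group_center_subset_centralizer[OF xG] mem_centralizer_self[OF xG] by blast
  then have "card (group_center G) < card (centralizer G x)"
    by (rule psubset_card_mono[OF finite_centralizer])
  then have "i \<noteq> 0" using i(2) by (intro notI) simp
  have "centralizer G x \<subset> carrier G"
    using x centralizer_eq_carrier_iff[OF xG] subgroup.subset[OF C] by blast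
  then have "card (centralizer G x) < card (carrier G)"
    by (rule psubset_card_mono[OF finite_carrier])
  then have "i \<noteq> 2" using i(2) card_carrier by (intro notI) simp
  with \<open>i \<noteq> 0\<close> i(1) have "i = 1" by linarith
  with i(2) show ?thesis by simp
qed

lemma subgroup_of_centralizer_eq:
  assumes w: "w \<in> carrier G - group_center G"
    and H: "subgroup H G" "group_center G \<subset> H" "H \<subseteq> centralizer G w"
  shows "H = centralizer G w"
proof -
  have finH: "finite H" using H(3) finite_centralizer finite_subset by blast
  have "card H dvd p ^ 1 * card (group_center G)"
    using card_subgroup_dvd[OF H(1) subgroup_centralizer H(3)] card_centralizer[OF w] w by simp
  then obtain i where i: "i \<le> 1" "card H = p ^ i * card (group_center G)"
    using card_subgroup_eq_prime_power_mult[OF prime_p subgroup_group_center H(1) _ finH] H(2)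
    by blast
  have "card (group_center G) < card H"
    by (rule psubset_card_mono[OF finH H(2)])
  then have "i \<noteq> 0" using i(2) by (intro notI) simp
  with i(1) have "i = 1" by linarith
  then have "card H = card (centralizer G w)"
    using i(2) card_centralizer[OF w] by simp
  then show ?thesis using card_subset_eq[OF finite_centralizer H(3)] by simp
qed

lemma centralizer_eq_of_mem:
  assumes x: "x \<in> carrier G - group_center G" and y: "y \<in> carrier G - group_center G"
    and yx: "y \<in> centralizer G x"
  shows "centralizer G y = centralizer G x"
proof -
  let ?K = "centralizer G x \<inter> centralizer G y"
  have xG: "x \<in> carrier G" and yG: "y \<in> carrier G" using x y by auto
  have "subgroup ?K G"
    using subgroups_Inter_pair[OF subgroup_centralizer[OF xG] subgroup_centralizer[OF yG]] .
  moreover have "group_center G \<subset> ?K"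
    using y yx group_center_subset_centralizer[OF xG] group_center_subset_centralizer[OF yG]
      mem_centralizer_self[OF yG] by blast
  ultimately have "?K = centralizer G x" "?K = centralizer G y"
    using subgroup_of_centralizer_eq[OF x] subgroup_of_centralizer_eq[OF y] by blast+
  then show ?thesis by simp
qed

lemma induced_noncent_degree_eq:
  assumes "x \<in> carrier G - group_center G"
  shows "induced_noncent_degree G x = card (carrier G) - p * card (group_center G)"
  using induced_noncent_degree_eq_card_diff_centralizer[OF finite_carrier assms
      centralizer_eq_of_mem[OF assms]] card_centralizer[OF assms]
  by simp

lemma induced_regular: "induced_regular G"
  by (simp add: induced_regular_def induced_noncent_degree_eq)

end

theorem proposition3p8:
  fixes G :: "('a, 'b) monoid_scheme" and p :: nat
  assumes "group G"
    and "finite (carrier G)"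
    and "\<not> comm_group G"
    and "Factorial_Ring.prime p"
    and "G Mod (group_center G) \<cong> (integer_mod_group p \<times>\<times> integer_mod_group p)"
  shows "induced_regular G"
proof -
  interpret group G by fact
  have "p > 1" using assms(4) prime_gt_1_nat by blast
  then have "card (carrier (integer_mod_group p \<times>\<times> integer_mod_group p)) = p ^ 2"
    by (simp add: carrier_integer_mod_group card_cartesian_product power2_eq_square)
  then have "card (rcosets\<^bsub>G\<^esub> group_center G) = p ^ 2"
    using iso_same_card[OF assms(5)] by (simp add: FactGroup_def)
  then have "card (carrier G) = p ^ 2 * card (group_center G)"
    using lagrange[OF subgroup_group_center] by (simp add: order_def)
  then interpret center_index_prime_square G p
    using assms(2,4) by unfold_locales
  show ?thesis by (rule induced_regular)
qed

end
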